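(* For $s\geq 0$ let $(G_s,\varphi)$ be as in the context. Then: (i) $(G_s,\varphi)$ is a Laplacian soliton with constant $c_s=-\tfrac{15}{8}+8s^2$ and derivation $D_s=\tfrac1{32}\mathrm{Diag}(45-32s-64s^2,\,5-32s-64s^2,\,45+32s-64s^2,\,5+32s-64s^2,\,50-128s^2,\,90-128s^2,\,0)\in\mathrm{Der}(\mathfrak g_s)$ (diagonal in the basis $e_1,\dots,e_7$); consequently it is shrinking if $s\in[0,\tfrac{\sqrt{15}}8)$, steady if $s=\tfrac{\sqrt{15}}8$, and expanding if $s\in(\tfrac{\sqrt{15}}8,\infty)$. (ii) $(G_s,\langle\cdot,\cdot\rangle)$ is an expanding Ricci soliton if and only if $s=\tfrac58$. (iii) For all $a,s\in\mathbb R$, the Lie algebras $\mathfrak g_s$ and $\mathfrak s_a$ are not isomorphic.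
   Context: For $s\in\mathbb R$, $\mathfrak g_s$ is the real Lie algebra with basis $\{e_1,\dots,e_7\}$ whose only nonzero brackets of basis elements (up to antisymmetry) are $[e_1,e_3]=-e_6$, $[e_1,e_4]=-e_5$, $[e_2,e_3]=-e_5$, $[e_7,e_i]=(A_s)_{ii}e_i$ ($i=1,\dots,6$), with $A_s=\mathrm{Diag}(\tfrac38+s,-\tfrac18+s,\tfrac38-s,-\tfrac18-s,\tfrac14,\tfrac34)$; $G_s$ is the simply connected Lie group with Lie algebra $\mathfrak g_s$, with left-invariant $G_2$-structure $\varphi=e^{127}+e^{347}+e^{567}+e^{135}-e^{146}-e^{236}-e^{245}$ ($e^{ijk}=e^i\wedge e^j\wedge e^k$, $\{e^i\}$ dual basis). $\langle\cdot,\cdot\rangle$ is the left-invariant metric induced by $\varphi$, making $\{e_i\}$ orthonormal; $\Delta=dd^*+d^*d$ is the Hodge Laplacian of this metric (orientation $e^{1234567}$). For $a\in\mathbb R$, $\mathfrak s_a$ is the real Lie algebra with basis $\{e_1,\dots,e_7\}$ whose only nonzero brackets of basis elements (up to antisymmetry) are $[e_1,e_3]=-e_6$, $[e_1,e_4]=-e_5$, $[e_2,e_3]=-e_5$, $[e_2,e_4]=e_6$, $[e_7,e_i]=(A_a)_{ii}e_i$ ($i=1,\dots,6$), with $A_a=\tfrac14\mathrm{Diag}(1+4a,1+4a,1-4a,1-4a,2,2)$. For $D\in\mathrm{Der}(\mathfrak g)$ of the Lie algebra $\mathfrak g$ of a simply connected Lie group $G$, $X_D$ is the vector field $X_D(p)=\frac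 d{dt}|_{0}f_t(p)$, with $f_t\in\mathrm{Aut}(G)$ the automorphism satisfying $df_t|_e=e^{tD}$. A left-invariant $G_2$-structure $\varphi$ is a Laplacian soliton with constant $c\in\mathbb R$ and derivation $D$ if $\Delta\varphi=c\varphi+\mathcal L_{X_D}\varphi$ ($\mathcal L$ the Lie derivative); it is shrinking, steady or expanding if $c<0$, $c=0$ or $c>0$. A left-invariant metric $\langle\cdot,\cdot\rangle$ on $G$ is a Ricci soliton if its Ricci operator satisfies $\mathrm{Ric}=c\,\mathrm{id}+D$ for some $c\in\mathbb R$ and $D\in\mathrm{Der}(\mathfrak g)$; it is expanding if $c<0$. *)

theory Defs
  imports "HOL-Analysis.Analysis"
begin

text \<open>Left-invariant objects on a simply connected Lie group are identified with
multilinear algebra on its Lie algebra, with basis e_1,...,e_7 (indices 1..7).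
A (mixed) form is given by its components on basis vectors:
omega L = omega(e_{L!0}, ..., e_{L!(k-1)}) for a list L of length k.
A Lie algebra is given by structure constants c: [e_a,e_b] = sum_m c a b m e_m.
An endomorphism D is given by its matrix: D e_a = sum_m D m a e_m.\<close>

type_synonym form = "nat list \<Rightarrow> real"
type_synonym structconst = "nat \<Rightarrow> nat \<Rightarrow> nat \<Rightarrow> real"
type_synonym endo = "nat \<Rightarrow> nat \<Rightarrow> real"

definition idx :: "nat set" where "idx = {1..7}"

definition lists_of :: "nat \<Rightarrow> nat list set" where
  "lists_of m = {L. set L \<subseteq> idx \<and> length L = m}"

definition inv_count :: "nat list \<Rightarrow> nat" where
  "inv_count L = card {(i, j). i < j \<and> j < length L \<and> L ! i > L ! j}"

text \<open>The basic form e^{i_1...i_k} (determinant convention).\<close>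
definition elem_form :: "nat list \<Rightarrow> form" where
  "elem_form I L = (if distinct I \<and> mset L = mset I
                    then (-1) ^ (inv_count L + inv_count I) else 0)"

definition levi :: "nat list \<Rightarrow> real" where
  "levi L = elem_form [1,2,3,4,5,6,7] L"

definition delete2 :: "nat \<Rightarrow> nat \<Rightarrow> nat list \<Rightarrow> nat list" where
  "delete2 i j L = map (nth L) (filter (\<lambda>p. p \<noteq> i \<and> p \<noteq> j) [0..<length L])"

definition ext_d :: "structconst \<Rightarrow> form \<Rightarrow> form" where
  "ext_d c \<omega> L = (\<Sum>i<length L. \<Sum>j<length L.
      if i < j then (-1) ^ (i + j) * (\<Sum>m\<in>idx. c (L ! i) (L ! j) m * \<omega> (m # delete2 i j L))
      else 0)"

text \<open>Hodge star of the metric making e_1..e_7 orthonormal, orientation e^{1234567}.\<close>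
definition hodge :: "form \<Rightarrow> form" where
  "hodge \<omega> J = (\<Sum>I\<in>lists_of (7 - length J). levi (I @ J) * \<omega> I) / fact (7 - length J)"

text \<open>Codifferential: on k-forms in dimension 7, d* = (-1)^k * d *.\<close>
definition codiff :: "structconst \<Rightarrow> form \<Rightarrow> form" where
  "codiff c \<omega> L = (-1) ^ (length L + 1) * hodge (ext_d c (hodge \<omega>)) L"

definition hodge_laplacian :: "structconst \<Rightarrow> form \<Rightarrow> form" where
  "hodge_laplacian c \<omega> L = ext_d c (codiff c \<omega>) L + codiff c (ext_d c \<omega>) L"

text \<open>Lie derivative of a left-invariant form along X_D:
(L_{X_D} omega)(x_1,..,x_k) = sum_p omega(x_1,..,D x_p,..,x_k).\<close>
definition lie_deriv_der :: "endo \<Rightarrow> form \<Rightarrow> form" where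
  "lie_deriv_der D \<omega> L = (\<Sum>p<length L. \<Sum>m\<in>idx. D m (L ! p) * \<omega> (L[p := m]))"

definition is_derivation :: "structconst \<Rightarrow> endo \<Rightarrow> bool" where
  "is_derivation c D \<longleftrightarrow> (\<forall>a\<in>idx. \<forall>b\<in>idx. \<forall>n\<in>idx.
     (\<Sum>m\<in>idx. c a b m * D n m) = (\<Sum>m\<in>idx. D m a * c m b n) + (\<Sum>m\<in>idx. D m b * c a m n))"

definition laplacian_soliton :: "structconst \<Rightarrow> form \<Rightarrow> real \<Rightarrow> endo \<Rightarrow> bool" where
  "laplacian_soliton c \<omega> lam D \<longleftrightarrow> is_derivation c D \<and>
     (\<forall>L\<in>lists_of 3. hodge_laplacian c \<omega> L = lam * \<omega> L + lie_deriv_der D \<omega> L)"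

text \<open>Levi-Civita connection of the left-invariant metric (Koszul formula):
Gamma a b m = < nabla_{e_a} e_b, e_m >.\<close>
definition lc_conn :: "structconst \<Rightarrow> nat \<Rightarrow> nat \<Rightarrow> nat \<Rightarrow> real" where
  "lc_conn c a b m = (c a b m - c b m a + c m a b) / 2"

text \<open>Curvature R(e_a,e_b)e_k = nabla_a nabla_b e_k - nabla_b nabla_a e_k - nabla_{[e_a,e_b]} e_k,
component along e_n.\<close>
definition riem :: "structconst \<Rightarrow> nat \<Rightarrow> nat \<Rightarrow> nat \<Rightarrow> nat \<Rightarrow> real" where
  "riem c a b k n = (\<Sum>m\<in>idx. lc_conn c b k m * lc_conn c a m n
                             - lc_conn c a k m * lc_conn c b m n
                             - c a b m * lc_conn c m k n)"

text \<open>Ricci tensor ric(e_b,e_k) = tr (x \<mapsto> R(x,e_b)e_k); since the basis is orthonormal,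
the Ricci operator has matrix entry (k,b) equal to ric c b k.\<close>
definition ric :: "structconst \<Rightarrow> nat \<Rightarrow> nat \<Rightarrow> real" where
  "ric c b k = (\<Sum>a\<in>idx. riem c a b k a)"

definition ricci_soliton :: "structconst \<Rightarrow> real \<Rightarrow> endo \<Rightarrow> bool" where
  "ricci_soliton c lam D \<longleftrightarrow> is_derivation c D \<and>
     (\<forall>b\<in>idx. \<forall>k\<in>idx. ric c b k = lam * (if b = k then 1 else 0) + D k b)"

definition expanding_ricci_soliton :: "structconst \<Rightarrow> bool" where
  "expanding_ricci_soliton c \<longleftrightarrow> (\<exists>lam D. lam < 0 \<and> ricci_soliton c lam D)"

definition lie_iso :: "structconst \<Rightarrow> structconst \<Rightarrow> endo \<Rightarrow> bool" where
  "lie_iso c1 c2 T \<longleftrightarrow>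
     (\<exists>S. \<forall>a\<in>idx. \<forall>b\<in>idx. (\<Sum>m\<in>idx. S a m * T m b) = (if a = b then 1 else 0)
                        \<and> (\<Sum>m\<in>idx. T a m * S m b) = (if a = b then 1 else 0)) \<and>
     (\<forall>a\<in>idx. \<forall>b\<in>idx. \<forall>n\<in>idx.
        (\<Sum>m\<in>idx. c1 a b m * T n m) = (\<Sum>p\<in>idx. \<Sum>q\<in>idx. T p a * T q b * c2 p q n))"

definition lie_isomorphic :: "structconst \<Rightarrow> structconst \<Rightarrow> bool" where
  "lie_isomorphic c1 c2 \<longleftrightarrow> (\<exists>T. lie_iso c1 c2 T)"

definition A_g :: "real \<Rightarrow> nat \<Rightarrow> real" where
  "A_g s i = (if i = 1 then 3/8 + s else if i = 2 then -1/8 + s else if i = 3 then 3/8 - s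
              else if i = 4 then -1/8 - s else if i = 5 then 1/4 else 3/4)"

definition ub_g :: "real \<Rightarrow> structconst" where
  "ub_g s a b m = (if (a, b, m) = (1, 3, 6) then -1 else 0) + (if (a, b, m) = (1, 4, 5) then -1 else 0)
     + (if (a, b, m) = (2, 3, 5) then -1 else 0)
     + (if a = 7 \<and> 1 \<le> b \<and> b \<le> 6 \<and> m = b then A_g s b else 0)"

definition g_sc :: "real \<Rightarrow> structconst" where
  "g_sc s a b m = ub_g s a b m - ub_g s b a m"

definition A_s :: "real \<Rightarrow> nat \<Rightarrow> real" where
  "A_s a i = (if i \<in> {1, 2} then (1 + 4 * a) / 4 else if i \<in> {3, 4} then (1 - 4 * a) / 4
              else 2 / 4)"

definition ub_s :: "real \<Rightarrow> structconst" where
  "ub_s x a b m = (if (a, b, m) = (1, 3, 6) then -1 else 0) + (if (a, b, m) = (1, 4, 5) then -1 else 0)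
     + (if (a, b, m) = (2, 3, 5) then -1 else 0) + (if (a, b, m) = (2, 4, 6) then 1 else 0)
     + (if a = 7 \<and> 1 \<le> b \<and> b \<le> 6 \<and> m = b then A_s x b else 0)"

definition s_sc :: "real \<Rightarrow> structconst" where
  "s_sc x a b m = ub_s x a b m - ub_s x b a m"

definition phi :: form where
  "phi L = elem_form [1,2,7] L + elem_form [3,4,7] L + elem_form [5,6,7] L + elem_form [1,3,5] L
         - elem_form [1,4,6] L - elem_form [2,3,6] L - elem_form [2,4,5] L"

definition D_s :: "real \<Rightarrow> endo" where
  "D_s s m k = (if m = k then
      (if k = 1 then 45 - 32* s - 64* s ^ 2 else if k = 2 then 5 - 32* s - 64* s ^ 2
       else if k = 3 then 45 + 32* s - 64* s ^ 2 else if k = 4 then 5 + 32* s - 64* s ^ 2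
       else if k = 5 then 50 - 128* s ^ 2 else if k = 6 then 90 - 128* s ^ 2 else 0) / 32
     else 0)"

definition c_s :: "real \<Rightarrow> real" where
  "c_s s = -15/8 + 8 * s^2"

end

theory Submission
  imports Defs "HOL-Combinatorics.Multiset_Permutations"
begin

(* All objects are left-invariant, so each claim is a finite computation in the Lie algebra.
   (i) The forms phi, d phi, *phi, d*phi, ... are alternating, so they are determined by their
   values on strictly increasing index lists, of which there are finitely many. One finds
   d phi = 0 and d*phi = beta = (5/4 - 2s) e^12 + (5/4 + 2s) e^34 - 5/2 e^56, and d beta agrees
   with c_s phi + L_{X_D} phi because the Lie derivative along a diagonal derivation multiplies
   e^{ijk} by d_i + d_j + d_k.
   (ii) The Ricci operator is diagonal. The derivation identities for [e7,e5] = e5/4 and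
   [e1,e3] = -e6 force D e7 = 0 and d_6 = d_1 + d_3 for any soliton derivation, which pins down
   c and then s^2 = 25/64; conversely at s = 5/8 the operator Ric + 5/2 is a derivation.
   (iii) An isomorphism preserves the linear form tr ad, so it maps the nilradical span(e1..e6)
   of g_s into that of s_a. Modulo its centre span(e5,e6), the nilradical of s_a is a complex
   Heisenberg algebra, where every u <> 0 has the two-dimensional centraliser span(u, Ju). Since
   e2 commutes with e1 and e4 in g_s, some nonzero combination of e1, e2, e4 is mapped into the
   centre; this contradicts injectivity, because the brackets of that combination with e1 and e3
   in g_s do not both vanish. *)

section \<open>Alternating forms\<close>

definition swap_adj :: "nat \<Rightarrow> nat list \<Rightarrow> nat list" where
  "swap_adj p L = L[p := L ! Suc p, Suc p := L ! p]"

definition alternating :: "form \<Rightarrow> bool" where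
  "alternating \<omega> \<longleftrightarrow> (\<forall>L p. Suc p < length L \<longrightarrow> \<omega> (swap_adj p L) = - \<omega> L)"

lemma inv_count_Nil [simp]: "inv_count [] = 0"
  by (simp add: inv_count_def)

lemma inv_count_Cons [simp]:
  "inv_count (x # xs) = length (filter (\<lambda>y. y < x) xs) + inv_count xs"
proof -
  let ?A = "{(i, j). i < j \<and> j < length (x#xs) \<and> (x#xs) ! i > (x#xs) ! j}"
  let ?B = "{(i, j). i < j \<and> j < length xs \<and> xs ! i > xs ! j}"
  let ?C = "{j. j < length xs \<and> xs ! j < x}"
  have eq: "?A = (\<lambda>j. (0, Suc j)) ` ?C \<union> (\<lambda>(i,j). (Suc i, Suc j)) ` ?B"
  proof (rule set_eqI, clarify)
    fix a b
    show "((a, b) \<in> ?A) = ((a, b) \<in> (\<lambda>j. (0, Suc j)) ` ?C \<union> (\<lambda>(i,j). (Suc i, Suc j)) ` ?B)"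
      by (cases a; cases b) (auto simp: image_iff)
  qed
  have fin_B: "finite ?B"
    by (rule finite_subset[of _ "{..<length xs} \<times> {..<length xs}"]) auto
  have "card ?A = card ((\<lambda>j. (0::nat, Suc j)) ` ?C) + card ((\<lambda>(i,j). (Suc i, Suc j)) ` ?B)"
    unfolding eq by (rule card_Un_disjoint) (use fin_B in auto)
  also have "\<dots> = card ?C + card ?B"
    by (subst card_image, simp add: inj_on_def)+ (auto simp: inj_on_def)
  finally show ?thesis
    by (simp add: inv_count_def length_filter_conv_card)
qed

lemma inv_count_sorted: "sorted L \<Longrightarrow> inv_count L = 0"
  by (induct L) (auto simp: filter_empty_conv)

lemma length_swap_adj [simp]: "length (swap_adj p L) = length L"
  by (simp add: swap_adj_def)

lemma mset_swap_adj [simp]: "Suc p < length L \<Longrightarrow> mset (swap_adj p L) = mset L"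
  unfolding swap_adj_def by (rule mset_swap) auto

lemma swap_adj_0_Cons [simp]: "swap_adj 0 (x # y # M) = y # x # M"
  by (simp add: swap_adj_def)

lemma swap_adj_Suc_Cons [simp]: "swap_adj (Suc p) (x # L) = x # swap_adj p L"
  by (simp add: swap_adj_def)

lemma swap_adj_append_left: "swap_adj (length R + p) (R @ L) = R @ swap_adj p L"
  by (induct R) (auto simp: swap_adj_def)

lemma swap_adj_append_right: "Suc p < length R \<Longrightarrow> swap_adj p (R @ L) = swap_adj p R @ L"
  by (auto simp: swap_adj_def nth_append list_update_append)

lemma swap_adj_last_two: "swap_adj (length R) (R @ [y, z]) = R @ [z, y]"
  using swap_adj_append_left[of R 0 "[y, z]"] by simp

lemma swap_adj_swap_adj: "Suc p < length L \<Longrightarrow> swap_adj p (swap_adj p L) = L"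
  by (auto simp: swap_adj_def nth_list_update list_update_swap intro!: nth_equalityI)

lemma inv_count_swap_adj:
  "Suc p < length L \<Longrightarrow>
   inv_count (swap_adj p L) + (if L ! Suc p < L ! p then 1 else 0)
   = inv_count L + (if L ! p < L ! Suc p then 1 else 0)"
proof (induct p arbitrary: L)
  case 0
  then obtain x y M where "L = x # y # M"
    by (metis Suc_length_conv length_0_conv less_Suc_eq_0_disj less_imp_Suc_add list.exhaust)
  then show ?case by auto
next
  case (Suc p)
  then obtain x L' where L: "L = x # L'" and p: "Suc p < length L'"
    by (cases L) auto
  have "length (filter (\<lambda>y. y < x) (swap_adj p L')) = length (filter (\<lambda>y. y < x) L')"
    by (metis mset_filter mset_swap_adj p size_mset)
  then show ?case unfolding L using Suc(1)[OF p] by simp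
qed

lemma sort_eq_if_mset_eq: "mset xs = mset ys \<Longrightarrow> sort xs = sort ys"
  by (metis properties_for_sort mset_sort sorted_sort)

lemma alternating_sort:
  assumes "alternating \<omega>"
  shows "\<omega> L = (-1) ^ inv_count L * \<omega> (sort L)"
proof (induct "inv_count L" arbitrary: L rule: less_induct)
  case less
  show ?case
  proof (cases "sorted L")
    case True
    then show ?thesis by (simp add: inv_count_sorted sorted_sort_id)
  next
    case False
    then obtain p where p: "Suc p < length L" "L ! Suc p < L ! p"
      by (auto simp: sorted_iff_nth_Suc not_le)
    define L' where "L' = swap_adj p L"
    have inv: "inv_count L' + 1 = inv_count L"
      using inv_count_swap_adj[OF p(1)] p(2) unfolding L'_def by auto
    have "sort L' = sort L"
      unfolding L'_def by (rule sort_eq_if_mset_eq) (simp add: p(1))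
    moreover have "\<omega> L = - \<omega> L'"
      using assms p(1) unfolding alternating_def L'_def by (metis length_swap_adj swap_adj_swap_adj)
    moreover have "\<omega> L' = (-1) ^ inv_count L' * \<omega> (sort L')"
      using less inv by auto
    ultimately show ?thesis using inv[symmetric] by simp
  qed
qed

lemma alternating_not_distinct:
  assumes "alternating \<omega>" "\<not> distinct L"
  shows "\<omega> L = 0"
proof -
  have "\<not> sorted_wrt (<) (sort L)" using assms(2) by (simp add: strict_sorted_iff)
  then obtain p where p: "Suc p < length (sort L)" "\<not> sort L ! p < sort L ! Suc p"
    by (auto simp: sorted_wrt_iff_nth_Suc_transp)
  moreover have "sort L ! p \<le> sort L ! Suc p"
    using p(1) by (intro sorted_nth_mono[OF sorted_sort]) auto
  ultimately have "swap_adj p (sort L) = sort L"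
    unfolding swap_adj_def by (metis list_update_id order_less_le)
  moreover have "\<omega> (swap_adj p (sort L)) = - \<omega> (sort L)"
    using assms(1) p(1) unfolding alternating_def by blast
  ultimately have "\<omega> (sort L) = 0" by simp
  then show ?thesis by (subst alternating_sort[OF assms(1), of L]) simp
qed

lemma alternating_eqI:
  assumes "alternating \<omega>" "alternating \<tau>"
    and "\<And>I. sorted_wrt (<) I \<Longrightarrow> set I \<subseteq> idx \<Longrightarrow> length I = k \<Longrightarrow> \<omega> I = \<tau> I"
    and "set L \<subseteq> idx" "length L = k"
  shows "\<omega> L = \<tau> L"
proof (cases "distinct L")
  case True
  then have "\<omega> (sort L) = \<tau> (sort L)"
    using assms(3-5) by (simp add: strict_sorted_iff)
  then show ?thesis
    using alternating_sort[OF assms(1)] alternating_sort[OF assms(2)] by metis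
qed (simp add: alternating_not_distinct assms(1,2))

lemma alternating_zero: "alternating (\<lambda>L. 0)"
  by (simp add: alternating_def)

lemma alternating_add: "alternating f \<Longrightarrow> alternating g \<Longrightarrow> alternating (\<lambda>L. f L + g L)"
  by (simp add: alternating_def)

lemma alternating_diff: "alternating f \<Longrightarrow> alternating g \<Longrightarrow> alternating (\<lambda>L. f L - g L)"
  by (simp add: alternating_def)

lemma alternating_scale: "alternating f \<Longrightarrow> alternating (\<lambda>L. r * f L)"
  by (simp add: alternating_def)

lemmas alternating_combination = alternating_add alternating_diff alternating_scale

lemma alternating_weighted:
  assumes "alternating \<omega>"
  shows "alternating (\<lambda>L. (r + sum_list (map f L)) * \<omega> L)"
  unfolding alternating_def
proof (intro allI impI)
  fix L :: "nat list" and p assume p: "Suc p < length L"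
  have "sum_list (map f (swap_adj p L)) = sum_list (map f L)"
    by (metis mset_map mset_swap_adj p sum_mset_sum_list)
  then show "(r + sum_list (map f (swap_adj p L))) * \<omega> (swap_adj p L) = - ((r + sum_list (map f L)) * \<omega> L)"
    using assms p unfolding alternating_def by simp
qed

lemma alternating_append_right: "alternating f \<Longrightarrow> alternating (\<lambda>I. f (I @ J))"
  unfolding alternating_def by (metis length_append swap_adj_append_right trans_less_add1)

lemma alternating_elem_form: "alternating (elem_form I)"
  unfolding alternating_def
proof (intro allI impI)
  fix L :: "nat list" and p assume p: "Suc p < length L"
  have ms: "mset (swap_adj p L) = mset L" using p by simp
  show "elem_form I (swap_adj p L) = - elem_form I L"
  proof (cases "distinct I \<and> mset L = mset I")
    case True
    then have "L ! p \<noteq> L ! Suc p"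
      using p by (metis Suc_lessD distinct_conv_nth mset_eq_imp_distinct_iff n_not_Suc_n)
    then have "inv_count (swap_adj p L) = Suc (inv_count L) \<or> inv_count L = Suc (inv_count (swap_adj p L))"
      using inv_count_swap_adj[OF p] by (auto split: if_splits)
    then have "(-1::real) ^ (inv_count (swap_adj p L) + inv_count I) = - ((-1) ^ (inv_count L + inv_count I))"
      by auto
    then show ?thesis using True ms by (simp add: elem_form_def)
  next
    case False
    then show ?thesis using ms by (auto simp: elem_form_def)
  qed
qed

lemma alternating_levi: "alternating levi"
  using alternating_elem_form unfolding levi_def[abs_def] by simp

lemma alternating_phi: "alternating phi"
  unfolding phi_def[abs_def] by (intro alternating_combination alternating_elem_form)

lemma alternating_hodge: "alternating (hodge \<omega>)"
  unfolding alternating_def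
proof (intro allI impI)
  fix J :: "nat list" and p assume p: "Suc p < length J"
  have "levi (I @ swap_adj p J) = - levi (I @ J)" for I
    using alternating_levi p swap_adj_append_left[of I p J]
    unfolding alternating_def by (metis add_Suc_right length_append nat_add_left_cancel_less)
  then show "hodge \<omega> (swap_adj p J) = - hodge \<omega> J"
    unfolding hodge_def by (simp add: sum_negf)
qed

lemma alternating_codiff: "alternating (codiff c \<omega>)"
  using alternating_hodge[of "ext_d c (hodge \<omega>)"] unfolding alternating_def codiff_def[abs_def] by simp

section \<open>The exterior derivative\<close>

definition contract_bracket :: "structconst \<Rightarrow> form \<Rightarrow> nat \<Rightarrow> nat \<Rightarrow> nat list \<Rightarrow> real" where
  "contract_bracket c \<omega> x y R = (\<Sum>m\<in>idx. c x y m * \<omega> (m # R))"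

(* Recursive form of ext_d: the prefix R collects the entries already passed over, which makes
   the swap lemmas below provable by induction on the remaining list. *)
fun ext_d_row :: "structconst \<Rightarrow> form \<Rightarrow> nat list \<Rightarrow> nat \<Rightarrow> nat list \<Rightarrow> real" where
  "ext_d_row c \<omega> R x [] = 0"
| "ext_d_row c \<omega> R x (y # M) = contract_bracket c \<omega> x y (R @ M) - ext_d_row c \<omega> (R @ [y]) x M"

fun ext_d_prefixed :: "structconst \<Rightarrow> form \<Rightarrow> nat list \<Rightarrow> nat list \<Rightarrow> real" where
  "ext_d_prefixed c \<omega> R [] = 0"
| "ext_d_prefixed c \<omega> R (x # L) = - ext_d_row c \<omega> R x L + ext_d_prefixed c \<omega> (R @ [x]) L"

definition delete1 :: "nat \<Rightarrow> nat list \<Rightarrow> nat list" where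
  "delete1 j L = map (nth L) (filter (\<lambda>p. p \<noteq> j) [0..<length L])"

lemma map_nth_filter_Cons:
  "map (nth (x # L)) (filter P [0..<Suc (length L)])
   = (if P 0 then [x] else []) @ map (nth L) (filter (\<lambda>p. P (Suc p)) [0..<length L])"
proof -
  have "[0..<Suc (length L)] = 0 # map Suc [0..<length L]"
    using upt_conv_Cons[of 0 "Suc (length L)"] map_Suc_upt[of 0 "length L"] by (simp del: upt_Suc)
  then show ?thesis by (simp add: filter_map comp_def)
qed

lemma delete2_0_Suc_Cons: "delete2 0 (Suc j) (x # L) = delete1 j L"
  unfolding delete2_def delete1_def using map_nth_filter_Cons[of x L "\<lambda>p. p \<noteq> 0 \<and> p \<noteq> Suc j"]
  by simp

lemma delete2_Suc_Suc_Cons: "delete2 (Suc i) (Suc j) (x # L) = x # delete2 i j L"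
  unfolding delete2_def using map_nth_filter_Cons[of x L "\<lambda>p. p \<noteq> Suc i \<and> p \<noteq> Suc j"]
  by simp

lemma delete1_0_Cons: "delete1 0 (y # M) = M"
  unfolding delete1_def using map_nth_filter_Cons[of y M "\<lambda>p. p \<noteq> 0"]
  by (simp add: map_nth)

lemma delete1_Suc_Cons: "delete1 (Suc j) (y # M) = y # delete1 j M"
  unfolding delete1_def using map_nth_filter_Cons[of y M "\<lambda>p. p \<noteq> Suc j"]
  by simp

lemma ext_d_row_eq_sum:
  "ext_d_row c \<omega> R x L = (\<Sum>j<length L. (-1) ^ j * contract_bracket c \<omega> x (L ! j) (R @ delete1 j L))"
proof (induct L arbitrary: R)
  case Nil then show ?case by simp
next
  case (Cons y M)
  show ?case
    by (simp add: sum.lessThan_Suc_shift Cons delete1_0_Cons delete1_Suc_Cons sum_negf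
        del: sum.lessThan_Suc)
qed

lemma ext_d_prefixed_eq_sum:
  "ext_d_prefixed c \<omega> R L = (\<Sum>i<length L. \<Sum>j<length L.
      if i < j then (-1) ^ (i + j) * contract_bracket c \<omega> (L ! i) (L ! j) (R @ delete2 i j L) else 0)"
proof (induct L arbitrary: R)
  case Nil then show ?case by simp
next
  case (Cons x L)
  have first_row: "(\<Sum>j<Suc (length L). if 0 < j then (-1) ^ j * contract_bracket c \<omega> ((x # L) ! 0)
        ((x # L) ! j) (R @ delete2 0 j (x # L)) else 0) = - ext_d_row c \<omega> R x L"
    by (simp add: sum.lessThan_Suc_shift ext_d_row_eq_sum delete2_0_Suc_Cons sum_negf
        del: sum.lessThan_Suc)
  have other_rows: "(\<Sum>i<length L. \<Sum>j<Suc (length L). if Suc i < j then (-1) ^ (Suc i + j) *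
        contract_bracket c \<omega> ((x # L) ! Suc i) ((x # L) ! j) (R @ delete2 (Suc i) j (x # L)) else 0)
        = ext_d_prefixed c \<omega> (R @ [x]) L"
    by (simp add: sum.lessThan_Suc_shift Cons delete2_Suc_Suc_Cons del: sum.lessThan_Suc cong: if_cong)
  show ?case
    apply (simp only: length_Cons sum.lessThan_Suc_shift[of "\<lambda>i. \<Sum>j<Suc (length L). _ i j"])
    using first_row other_rows by (simp del: sum.lessThan_Suc)
qed

lemma ext_d_eq_prefixed: "ext_d c \<omega> L = ext_d_prefixed c \<omega> [] L"
  by (simp add: ext_d_def ext_d_prefixed_eq_sum contract_bracket_def cong: if_cong)

definition antisym_sc :: "structconst \<Rightarrow> bool" where
  "antisym_sc c \<longleftrightarrow> (\<forall>a b m. c a b m = - c b a m)"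

context
  fixes c :: structconst and \<omega> :: form
  assumes alt: "alternating \<omega>" and antisym: "antisym_sc c"
begin

lemma contract_bracket_swap_prefix:
  assumes "Suc q < length R"
  shows "contract_bracket c \<omega> x y (swap_adj q R) = - contract_bracket c \<omega> x y R"
proof -
  have "\<omega> (m # swap_adj q R) = - \<omega> (m # R)" for m
    using alt assms swap_adj_Suc_Cons[of q m R] unfolding alternating_def
    by (metis Suc_less_eq length_Cons)
  then show ?thesis unfolding contract_bracket_def by (simp add: sum_negf)
qed

lemma contract_bracket_commute: "contract_bracket c \<omega> y x R = - contract_bracket c \<omega> x y R"
proof -
  have "c y x m = - c x y m" for m using antisym unfolding antisym_sc_def by blast
  then show ?thesis unfolding contract_bracket_def by (simp add: sum_negf)
qed

lemma ext_d_row_swap_prefix: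
  "Suc q < length R \<Longrightarrow> ext_d_row c \<omega> (swap_adj q R) x L = - ext_d_row c \<omega> R x L"
proof (induct L arbitrary: R)
  case Nil then show ?case by simp
next
  case (Cons y M)
  have "swap_adj q R @ M = swap_adj q (R @ M)" "swap_adj q R @ [y] = swap_adj q (R @ [y])"
    using Cons(2) by (simp_all add: swap_adj_append_right)
  moreover have "contract_bracket c \<omega> x y (swap_adj q (R @ M)) = - contract_bracket c \<omega> x y (R @ M)"
    using Cons(2) by (intro contract_bracket_swap_prefix) simp
  moreover have "ext_d_row c \<omega> (swap_adj q (R @ [y])) x M = - ext_d_row c \<omega> (R @ [y]) x M"
    using Cons by simp
  ultimately show ?case by simp
qed

lemma ext_d_prefixed_swap_prefix:
  "Suc q < length R \<Longrightarrow> ext_d_prefixed c \<omega> (swap_adj q R) L = - ext_d_prefixed c \<omega> R L"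
proof (induct L arbitrary: R)
  case Nil then show ?case by simp
next
  case (Cons x L)
  have "swap_adj q R @ [x] = swap_adj q (R @ [x])" using Cons(2) by (simp add: swap_adj_append_right)
  moreover have "ext_d_prefixed c \<omega> (swap_adj q (R @ [x])) L = - ext_d_prefixed c \<omega> (R @ [x]) L"
    using Cons by simp
  ultimately show ?case using ext_d_row_swap_prefix[OF Cons(2)] by simp
qed

lemma ext_d_row_swap:
  "Suc p < length L \<Longrightarrow> ext_d_row c \<omega> R x (swap_adj p L) = - ext_d_row c \<omega> R x L"
proof (induct L arbitrary: R p)
  case Nil then show ?case by simp
next
  case (Cons y L')
  show ?case
  proof (cases p)
    case 0
    with Cons(2) obtain z M where L': "L' = z # M" by (cases L') auto
    have "ext_d_row c \<omega> (R @ [z, y]) x M = - ext_d_row c \<omega> (R @ [y, z]) x M"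
      using ext_d_row_swap_prefix[of "length R" "R @ [y, z]" x M] by (simp add: swap_adj_last_two)
    then show ?thesis unfolding 0 L' by simp
  next
    case (Suc p')
    with Cons(2) have p': "Suc p' < length L'" by simp
    have "contract_bracket c \<omega> x y (R @ swap_adj p' L') = - contract_bracket c \<omega> x y (R @ L')"
      using contract_bracket_swap_prefix[of "length R + p'" "R @ L'"] p'
      by (simp add: swap_adj_append_left)
    then show ?thesis unfolding Suc using Cons(1)[OF p'] by simp
  qed
qed

lemma ext_d_prefixed_swap:
  "Suc p < length L \<Longrightarrow> ext_d_prefixed c \<omega> R (swap_adj p L) = - ext_d_prefixed c \<omega> R L"
proof (induct L arbitrary: R p)
  case Nil then show ?case by simp
next
  case (Cons x L')
  show ?case
  proof (cases p)
    case 0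
    with Cons(2) obtain y M where L': "L' = y # M" by (cases L') auto
    have "ext_d_prefixed c \<omega> (R @ [y, x]) M = - ext_d_prefixed c \<omega> (R @ [x, y]) M"
      using ext_d_prefixed_swap_prefix[of "length R" "R @ [x, y]" M] by (simp add: swap_adj_last_two)
    then show ?thesis unfolding 0 L' using contract_bracket_commute[of x y "R @ M"] by simp
  next
    case (Suc p')
    with Cons(2) have p': "Suc p' < length L'" by simp
    show ?thesis unfolding Suc using Cons(1)[OF p'] ext_d_row_swap[OF p'] by simp
  qed
qed

lemma alternating_ext_d: "alternating (ext_d c \<omega>)"
  unfolding alternating_def ext_d_eq_prefixed using ext_d_prefixed_swap by simp

end

lemma ext_d_row_cong:
  assumes "\<And>X. set X \<subseteq> idx \<Longrightarrow> length X = length R + length L \<Longrightarrow> \<omega> X = \<omega>' X"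
    and "set R \<subseteq> idx" "set L \<subseteq> idx"
  shows "ext_d_row c \<omega> R x L = ext_d_row c \<omega>' R x L"
  using assms
proof (induct L arbitrary: R)
  case Nil then show ?case by simp
next
  case (Cons y M)
  have "contract_bracket c \<omega> x y (R @ M) = contract_bracket c \<omega>' x y (R @ M)"
    unfolding contract_bracket_def using Cons(2-4) by (intro sum.cong refl arg_cong2[where f="(*)"]) auto
  moreover have "ext_d_row c \<omega> (R @ [y]) x M = ext_d_row c \<omega>' (R @ [y]) x M"
    using Cons(2-4) by (intro Cons(1)) auto
  ultimately show ?case by simp
qed

lemma ext_d_prefixed_cong:
  assumes "\<And>X. set X \<subseteq> idx \<Longrightarrow> length X = length R + length L - 1 \<Longrightarrow> \<omega> X = \<omega>' X"
    and "set R \<subseteq> idx" "set L \<subseteq> idx"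
  shows "ext_d_prefixed c \<omega> R L = ext_d_prefixed c \<omega>' R L"
  using assms
proof (induct L arbitrary: R)
  case Nil then show ?case by simp
next
  case (Cons x L)
  have "ext_d_row c \<omega> R x L = ext_d_row c \<omega>' R x L"
    using Cons(2-4) by (intro ext_d_row_cong) auto
  moreover have "ext_d_prefixed c \<omega> (R @ [x]) L = ext_d_prefixed c \<omega>' (R @ [x]) L"
    using Cons(2-4) by (intro Cons(1)) auto
  ultimately show ?case by simp
qed

lemma ext_d_cong:
  assumes "\<And>X. set X \<subseteq> idx \<Longrightarrow> length X = length L - 1 \<Longrightarrow> \<omega> X = \<omega>' X"
    and "set L \<subseteq> idx"
  shows "ext_d c \<omega> L = ext_d c \<omega>' L"
  unfolding ext_d_eq_prefixed using assms by (intro ext_d_prefixed_cong) auto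

lemma idx_eq: "idx = set [1,2,3,4,5,6,7::nat]"
  unfolding idx_def by auto

lemma mem_idx_iff: "k \<in> idx \<longleftrightarrow> 1 \<le> k \<and> k \<le> 7"
  by (simp add: idx_def)

lemma sum_idx: "(\<Sum>m\<in>idx. f m) = f 1 + f 2 + f 3 + f 4 + f 5 + f 6 + f 7"
  unfolding idx_eq by (simp add: add_ac)

lemma finite_lists_of: "finite (lists_of k)"
  unfolding lists_of_def idx_def by (rule finite_lists_length_eq) simp

fun increasing_lists :: "nat \<Rightarrow> nat \<Rightarrow> nat list list" where
  "increasing_lists lo 0 = [[]]"
| "increasing_lists lo (Suc k) =
     concat (map (\<lambda>x. map ((#) x) (increasing_lists (Suc x) k)) [lo..<8])"

lemma increasing_lists_complete:
  "sorted_wrt (<) L \<Longrightarrow> set L \<subseteq> {lo..<8} \<Longrightarrow> length L = k \<Longrightarrow> L \<in> set (increasing_lists lo k)"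
proof (induct k arbitrary: lo L)
  case 0 then show ?case by simp
next
  case (Suc k)
  from Suc(4) obtain x L' where L: "L = x # L'" by (cases L) auto
  have "L' \<in> set (increasing_lists (Suc x) k)"
    using Suc(2-4) unfolding L by (intro Suc(1)) (auto simp: Suc_le_eq)
  moreover have "x \<in> set [lo..<8]" using Suc(3) unfolding L by auto
  ultimately show ?case unfolding L by auto
qed

lemma increasing_lists_sound:
  "L \<in> set (increasing_lists lo k) \<Longrightarrow> sorted_wrt (<) L \<and> set L \<subseteq> {lo..<8} \<and> length L = k"
proof (induct k arbitrary: lo L)
  case (Suc k)
  then obtain x L' where "L = x # L'" "lo \<le> x" "x < 8" "L' \<in> set (increasing_lists (Suc x) k)"
    by auto
  with Suc(1)[of L' "Suc x"] show ?case by auto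
qed simp

lemma alternating_eq_on_increasing_lists:
  assumes "alternating \<omega>" "alternating \<tau>"
    and "\<forall>I\<in>set (increasing_lists 1 k). \<omega> I = \<tau> I"
    and "set L \<subseteq> idx" "length L = k"
  shows "\<omega> L = \<tau> L"
proof (rule alternating_eqI[OF assms(1,2) _ assms(4,5)])
  fix I assume "sorted_wrt (<) I" "set I \<subseteq> idx" "length I = k"
  then have "I \<in> set (increasing_lists 1 k)"
    by (intro increasing_lists_complete) (auto simp: idx_def)
  then show "\<omega> I = \<tau> I" using assms(3) by blast
qed

definition idx_compl :: "nat list \<Rightarrow> nat list" where
  "idx_compl J = filter (\<lambda>x. x \<notin> set J) [1..<8]"

lemma set_idx_compl: "set (idx_compl J) = idx - set J"
  unfolding idx_compl_def idx_def by auto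

lemma length_idx_compl:
  assumes "distinct J" "set J \<subseteq> idx"
  shows "length (idx_compl J) = 7 - length J"
proof -
  have "length (idx_compl J) = card (idx - set J)"
    by (metis distinct_card distinct_filter distinct_upt idx_compl_def set_idx_compl)
  also have "\<dots> = 7 - length J"
    using assms by (simp add: card_Diff_subset distinct_card idx_def)
  finally show ?thesis .
qed

lemma levi_append_mult_sort:
  assumes "alternating \<omega>"
  shows "levi (I @ J) * \<omega> I = levi (sort I @ J) * \<omega> (sort I)"
proof -
  have levi_I: "levi (I @ J) = (-1) ^ inv_count I * levi (sort I @ J)"
    using alternating_sort[OF alternating_append_right[OF alternating_levi], of I J] by simp
  have "(-1::real) ^ inv_count I * (-1) ^ inv_count I = 1"
    by (simp add: power_mult_distrib[symmetric])
  then show ?thesis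
    unfolding levi_I alternating_sort[OF assms, of I]
    by (metis (no_types, lifting) mult.assoc mult.left_commute mult_1)
qed

lemma levi_append_mult_eq:
  assumes alt: "alternating \<omega>"
  shows "levi (I @ J) * \<omega> I = (if I \<in> permutations_of_set (idx - set J)
           then levi (idx_compl J @ J) * \<omega> (idx_compl J) else 0)"
proof (cases "distinct I")
  case True
  show ?thesis
  proof (cases "I \<in> permutations_of_set (idx - set J)")
    case True
    then have "set I = idx - set J" unfolding permutations_of_set_def by simp
    moreover have "sorted (idx_compl J)" "distinct (idx_compl J)"
      unfolding idx_compl_def by (auto intro: sorted_wrt_filter)
    ultimately have "sort I = idx_compl J"
      using set_idx_compl[of J] by (intro sorted_distinct_set_unique) (auto simp: \<open>distinct I\<close>)
    then show ?thesis using levi_append_mult_sort[OF alt, of I J] True by simp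
  next
    case False
    have "levi (sort I @ J) = 0"
    proof (rule ccontr)
      assume "levi (sort I @ J) \<noteq> 0"
      then have "distinct (sort I @ J) \<and> set (sort I @ J) = idx"
        unfolding levi_def elem_form_def idx_eq by (metis mset_eq_imp_distinct_iff mset_eq_setD)
      then show False using False \<open>distinct I\<close> unfolding permutations_of_set_def by auto
    qed
    then show ?thesis using levi_append_mult_sort[OF alt, of I J] False by simp
  qed
next
  case False
  then show ?thesis
    using alternating_not_distinct[OF alt] unfolding permutations_of_set_def by simp
qed

(* The k! orderings of the complement of J all contribute the same term to the Hodge star. *)
lemma hodge_eq_levi_idx_compl:
  assumes alt: "alternating \<omega>" and J: "distinct J" "set J \<subseteq> idx"
  shows "hodge \<omega> J = levi (idx_compl J @ J) * \<omega> (idx_compl J)"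
proof -
  define k where "k = 7 - length J"
  define P where "P = permutations_of_set (idx - set J)"
  define v where "v = levi (idx_compl J @ J) * \<omega> (idx_compl J)"
  have summand: "levi (I @ J) * \<omega> I = (if I \<in> P then v else 0)" for I
    unfolding P_def v_def by (rule levi_append_mult_eq[OF alt])
  have card_compl: "card (idx - set J) = k"
    unfolding k_def using J by (simp add: card_Diff_subset distinct_card idx_def)
  then have "P \<subseteq> lists_of k"
    unfolding P_def lists_of_def permutations_of_set_def by (auto simp: distinct_card[symmetric])
  then have "lists_of k \<inter> P = P" by auto
  then have "(\<Sum>I\<in>lists_of k. levi (I @ J) * \<omega> I) = (\<Sum>I\<in>P. v)"
    unfolding summand using sum.inter_restrict[OF finite_lists_of, of "\<lambda>_. v" k P] by simp
  also have "\<dots> = fact k * v"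
    unfolding P_def using card_compl by (simp add: idx_def)
  finally show ?thesis
    unfolding hodge_def k_def[symmetric] v_def by simp
qed

lemma codiff_eq_0:
  assumes "length L \<le> 6" and vanish: "\<forall>X\<in>lists_of (Suc (length L)). \<omega> X = 0"
  shows "codiff c \<omega> L = 0"
proof -
  have "hodge \<omega> Y = 0" if "length Y = 6 - length L" for Y
    using that assms unfolding hodge_def by (simp add: Suc_diff_le)
  then have "ext_d c (hodge \<omega>) X = ext_d c (\<lambda>_. 0) X" if "X \<in> lists_of (7 - length L)" for X
    using that by (intro ext_d_cong) (auto simp: lists_of_def)
  then have "hodge (ext_d c (hodge \<omega>)) L = 0"
    unfolding hodge_def by (simp add: ext_d_def cong: if_cong)
  then show ?thesis unfolding codiff_def by simp
qed

definition diag_endo :: "(nat \<Rightarrow> real) \<Rightarrow> endo" where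
  "diag_endo f m k = (if m = k then f k else 0)"

lemma sum_mult_diag_endo:
  "n \<in> idx \<Longrightarrow> (\<Sum>m\<in>idx. g m * diag_endo f n m) = g n * f n"
proof -
  have "(\<Sum>m\<in>idx. g m * diag_endo f n m) = (\<Sum>m\<in>idx. if m = n then g n * f n else 0)"
    by (rule sum.cong) (auto simp: diag_endo_def)
  then show "n \<in> idx \<Longrightarrow> ?thesis" by (simp add: idx_def)
qed

lemma sum_diag_endo_mult:
  "a \<in> idx \<Longrightarrow> (\<Sum>m\<in>idx. diag_endo f m a * g m) = f a * g a"
proof -
  have "(\<Sum>m\<in>idx. diag_endo f m a * g m) = (\<Sum>m\<in>idx. if m = a then f a * g a else 0)"
    by (rule sum.cong) (auto simp: diag_endo_def)
  then show "a \<in> idx \<Longrightarrow> ?thesis" by (simp add: idx_def)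
qed

lemma lie_deriv_der_diag_endo:
  assumes "set L \<subseteq> idx"
  shows "lie_deriv_der (diag_endo f) \<omega> L = sum_list (map f L) * \<omega> L"
proof -
  have "lie_deriv_der (diag_endo f) \<omega> L = (\<Sum>p<length L. f (L ! p) * \<omega> (L[p := L ! p]))"
    unfolding lie_deriv_der_def using assms by (intro sum.cong refl sum_diag_endo_mult) auto
  also have "\<dots> = sum_list (map f L) * \<omega> L"
    by (simp add: sum_distrib_right sum_list_sum_nth atLeast0LessThan)
  finally show ?thesis .
qed

lemma is_derivation_diag_endo:
  assumes "\<forall>a\<in>idx. \<forall>b\<in>idx. \<forall>n\<in>idx. c a b n * f n = (f a + f b) * c a b n"
  shows "is_derivation c (diag_endo f)"
  unfolding is_derivation_def
  using assms by (simp add: sum_mult_diag_endo sum_diag_endo_mult distrib_right)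

section \<open>The Laplacian soliton\<close>

lemma antisym_sc_g_sc: "antisym_sc (g_sc s)"
  unfolding antisym_sc_def g_sc_def by simp

lemma elem_form_eq_sort:
  "elem_form I L = (if distinct I \<and> sort L = sort I then (-1) ^ (inv_count L + inv_count I) else 0)"
  unfolding elem_form_def by (metis mset_sort sort_eq_if_mset_eq)

(* Skipping the vanishing structure constants keeps the symbolic evaluation small. *)
lemma contract_bracket_sparse:
  "contract_bracket c \<omega> x y R = (\<Sum>m\<in>idx. if c x y m = 0 then 0 else c x y m * \<omega> (m # R))"
  unfolding contract_bracket_def by (rule sum.cong) auto

lemmas g_sc_eval = g_sc_def ub_g_def A_g_def

lemmas form_eval = ext_d_eq_prefixed sum_idx phi_def elem_form_eq_sort idx_compl_def upt_rec
  numeral_eq_Suc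

definition psi_form :: form where
  "psi_form L = elem_form [1,2,3,4] L + elem_form [1,2,5,6] L + elem_form [1,3,6,7] L
    + elem_form [1,4,5,7] L + elem_form [2,3,5,7] L - elem_form [2,4,6,7] L + elem_form [3,4,5,6] L"

lemma alternating_psi_form: "alternating psi_form"
  unfolding psi_form_def[abs_def] by (intro alternating_combination alternating_elem_form)

lemma hodge_phi:
  assumes "set L \<subseteq> idx" "length L = 4"
  shows "hodge phi L = psi_form L"
proof (rule alternating_eq_on_increasing_lists[OF alternating_hodge alternating_psi_form _ assms])
  have "\<forall>I\<in>set (increasing_lists 1 4). levi (idx_compl I @ I) * phi (idx_compl I) = psi_form I"
    by (simp add: form_eval levi_def psi_form_def)
  moreover have "distinct I \<and> set I \<subseteq> idx" if "I \<in> set (increasing_lists 1 4)" for I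
    using increasing_lists_sound[OF that] by (auto simp: idx_def strict_sorted_iff)
  ultimately show "\<forall>I\<in>set (increasing_lists 1 4). hodge phi I = psi_form I"
    using hodge_eq_levi_idx_compl[OF alternating_phi] by simp
qed

lemma ext_d_phi:
  assumes "set L \<subseteq> idx" "length L = 4"
  shows "ext_d (g_sc s) phi L = 0"
  by (rule alternating_eq_on_increasing_lists[OF alternating_ext_d[OF alternating_phi antisym_sc_g_sc]
        alternating_zero _ assms])
    (simp add: form_eval contract_bracket_sparse g_sc_eval)

definition beta_form :: "real \<Rightarrow> form" where
  "beta_form s L = (5/4 - 2 * s) * elem_form [1,2] L + (5/4 + 2 * s) * elem_form [3,4] L
    - 5/2 * elem_form [5,6] L"

lemma alternating_beta_form: "alternating (beta_form s)"
  unfolding beta_form_def[abs_def] by (intro alternating_combination alternating_elem_form)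

lemma codiff_phi:
  assumes "set L \<subseteq> idx" "length L = 2"
  shows "codiff (g_sc s) phi L = beta_form s L"
proof (rule alternating_eq_on_increasing_lists[OF alternating_codiff alternating_beta_form _ assms])
  have "codiff (g_sc s) phi I = - (levi (idx_compl I @ I) * ext_d (g_sc s) psi_form (idx_compl I))"
    if "I \<in> set (increasing_lists 1 2)" for I
  proof -
    from increasing_lists_sound[OF that] have I: "distinct I" "set I \<subseteq> idx" "length I = 2"
      by (auto simp: idx_def strict_sorted_iff)
    have "ext_d (g_sc s) (hodge phi) (idx_compl I) = ext_d (g_sc s) psi_form (idx_compl I)"
      using length_idx_compl[OF I(1,2)] I(3) by (intro ext_d_cong hodge_phi) (auto simp: set_idx_compl)
    then show ?thesis
      unfolding codiff_def
      using hodge_eq_levi_idx_compl[OF alternating_ext_d[OF alternating_hodge antisym_sc_g_sc] I(1,2)] I(3)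
      by simp
  qed
  moreover have "\<forall>I\<in>set (increasing_lists 1 2).
      - (levi (idx_compl I @ I) * ext_d (g_sc s) psi_form (idx_compl I)) = beta_form s I"
    by (simp add: form_eval contract_bracket_sparse g_sc_eval levi_def psi_form_def beta_form_def)
  ultimately show "\<forall>I\<in>set (increasing_lists 1 2). codiff (g_sc s) phi I = beta_form s I"
    by simp
qed

lemma ext_d_beta_form:
  assumes "set L \<subseteq> idx" "length L = 3"
  shows "ext_d (g_sc s) (beta_form s) L = (c_s s + sum_list (map (\<lambda>k. D_s s k k) L)) * phi L"
  by (rule alternating_eq_on_increasing_lists[OF alternating_ext_d[OF alternating_beta_form antisym_sc_g_sc]
        alternating_weighted[OF alternating_phi] _ assms])
    (simp add: form_eval contract_bracket_def g_sc_eval beta_form_def D_s_def c_s_def, simp add: field_simps)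

lemma D_s_eq_diag_endo: "D_s s = diag_endo (\<lambda>k. D_s s k k)"
  by (auto simp: fun_eq_iff diag_endo_def D_s_def)

lemma hodge_laplacian_phi:
  assumes "L \<in> lists_of 3"
  shows "hodge_laplacian (g_sc s) phi L = c_s s * phi L + lie_deriv_der (D_s s) phi L"
proof -
  from assms have L: "set L \<subseteq> idx" "length L = 3" by (auto simp: lists_of_def)
  have "ext_d (g_sc s) (codiff (g_sc s) phi) L = ext_d (g_sc s) (beta_form s) L"
    using L by (intro ext_d_cong codiff_phi) auto
  moreover have "codiff (g_sc s) (ext_d (g_sc s) phi) L = 0"
    using L by (intro codiff_eq_0) (auto simp: lists_of_def ext_d_phi)
  ultimately show ?thesis
    unfolding hodge_laplacian_def ext_d_beta_form[OF L]
    by (subst D_s_eq_diag_endo) (simp add: lie_deriv_der_diag_endo L(1) algebra_simps)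
qed

lemma is_derivation_D_s: "is_derivation (g_sc s) (D_s s)"
  by (subst D_s_eq_diag_endo, rule is_derivation_diag_endo)
    (simp add: idx_eq g_sc_eval D_s_def field_simps)

theorem laplacian_soliton_g_sc: "laplacian_soliton (g_sc s) phi (c_s s) (D_s s)"
  unfolding laplacian_soliton_def using is_derivation_D_s hodge_laplacian_phi by blast

theorem c_s_sign:
  assumes "s \<ge> 0"
  shows "(s < sqrt 15 / 8 \<longrightarrow> c_s s < 0) \<and> (s = sqrt 15 / 8 \<longrightarrow> c_s s = 0)
         \<and> (s > sqrt 15 / 8 \<longrightarrow> c_s s > 0)"
proof -
  have c_s_factor: "c_s s = (8 * s - sqrt 15) * (8 * s + sqrt 15) / 8"
    unfolding c_s_def by (simp add: algebra_simps power2_eq_square)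
  have "8 * s + sqrt 15 > 0"
    using assms by (simp add: add_nonneg_pos)
  then show ?thesis
    unfolding c_s_factor by (auto intro: mult_neg_pos mult_pos_pos)
qed

section \<open>Ricci solitons\<close>

lemmas ric_eval = ric_def riem_def lc_conn_def sum_idx g_sc_eval

lemma ric_g_sc_1_1: "ric (g_sc s) 1 1 = -25/16 - 3/2 * s"
  by (simp add: ric_eval field_simps)

lemma ric_g_sc_3_3: "ric (g_sc s) 3 3 = -25/16 + 3/2 * s"
  by (simp add: ric_eval field_simps)

lemma ric_g_sc_6_6: "ric (g_sc s) 6 6 = -5/8"
  by (simp add: ric_eval field_simps)

lemma ric_g_sc_7_7: "ric (g_sc s) 7 7 = -15/16 - 4 * s^2"
  by (simp add: ric_eval field_simps power2_eq_square)

lemma ricci_soliton_g_sc_imp: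
  assumes "s \<ge> 0" and "ricci_soliton (g_sc s) lam D"
  shows "s = 5/8"
proof -
  have bracket: "(\<Sum>m\<in>idx. g_sc s a b m * D n m)
      = (\<Sum>m\<in>idx. D m a * g_sc s m b n) + (\<Sum>m\<in>idx. D m b * g_sc s a m n)"
    if "a \<in> idx" "b \<in> idx" "n \<in> idx" for a b n
    using assms(2) that unfolding ricci_soliton_def is_derivation_def by blast
  have D_diag: "D k k = ric (g_sc s) k k - lam" if "k \<in> idx" for k
    using assms(2) that unfolding ricci_soliton_def by simp
  have D_vals: "D 1 1 = -25/16 - 3/2 * s - lam" "D 3 3 = -25/16 + 3/2 * s - lam"
    "D 6 6 = -5/8 - lam" "D 7 7 = -15/16 - 4 * s^2 - lam"
    using D_diag[of 1, unfolded ric_g_sc_1_1] D_diag[of 3, unfolded ric_g_sc_3_3]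
      D_diag[of 6, unfolded ric_g_sc_6_6] D_diag[of 7, unfolded ric_g_sc_7_7]
    by (simp_all add: mem_idx_iff)
  have "D 7 7 = 0"
    using bracket[of 7 5 5] by (simp add: mem_idx_iff sum_idx g_sc_eval)
  moreover have "D 6 6 = D 1 1 + D 3 3"
    using bracket[of 1 3 6] by (simp add: mem_idx_iff sum_idx g_sc_eval)
  ultimately have "s^2 = 25/64"
    using D_vals by linarith
  then have "(s - 5/8) * (s + 5/8) = 0"
    by (simp add: algebra_simps power2_eq_square)
  moreover have "s + 5/8 \<noteq> 0"
    using assms(1) by simp
  ultimately show ?thesis by simp
qed

definition ricci_derivation_5_8 :: "nat \<Rightarrow> real" where
  "ricci_derivation_5_8 k =
     (if k = 2 then 5/4 else if k \<in> {3, 6} then 15/8 else if k \<in> {4, 5} then 25/8 else 0)"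

lemma ricci_soliton_g_sc_5_8: "ricci_soliton (g_sc (5/8)) (-5/2) (diag_endo ricci_derivation_5_8)"
  unfolding ricci_soliton_def
proof
  show "is_derivation (g_sc (5/8)) (diag_endo ricci_derivation_5_8)"
    by (rule is_derivation_diag_endo) (simp add: idx_eq g_sc_eval ricci_derivation_5_8_def)
  have "\<forall>b\<in>set [1,2,3,4,5,6,7]. \<forall>k\<in>set [1,2,3,4,5,6,7]. ric (g_sc (5/8)) b k
      = -5/2 * (if b = k then 1 else 0) + diag_endo ricci_derivation_5_8 k b"
    by (simp add: ric_eval ricci_derivation_5_8_def diag_endo_def)
  then show "\<forall>b\<in>idx. \<forall>k\<in>idx. ric (g_sc (5/8)) b k
      = -5/2 * (if b = k then 1 else 0) + diag_endo ricci_derivation_5_8 k b"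
    by (simp only: idx_eq)
qed

theorem expanding_ricci_soliton_g_sc_iff:
  assumes "s \<ge> 0"
  shows "expanding_ricci_soliton (g_sc s) \<longleftrightarrow> s = 5/8"
proof
  assume "expanding_ricci_soliton (g_sc s)"
  then obtain lam D where "ricci_soliton (g_sc s) lam D"
    unfolding expanding_ricci_soliton_def by blast
  with assms show "s = 5/8" by (rule ricci_soliton_g_sc_imp)
next
  assume "s = 5/8"
  show "expanding_ricci_soliton (g_sc s)"
    unfolding expanding_ricci_soliton_def \<open>s = 5/8\<close>
    by (rule exI, rule exI, rule conjI[OF _ ricci_soliton_g_sc_5_8]) simp
qed

section \<open>Lie algebra isomorphisms\<close>

lemma lie_iso_bracket:
  assumes "lie_iso c1 c2 T" "a \<in> idx" "b \<in> idx" "n \<in> idx"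
  shows "(\<Sum>m\<in>idx. c1 a b m * T n m) = (\<Sum>p\<in>idx. \<Sum>q\<in>idx. T p a * T q b * c2 p q n)"
  using assms unfolding lie_iso_def by blast

lemma sum_idx_delta: "k \<in> idx \<Longrightarrow> (\<Sum>q\<in>idx. f q * (if q = k then 1 else 0)) = (f k :: real)"
  by (simp add: idx_def if_distrib cong: if_cong)

lemma lie_iso_injective:
  assumes "lie_iso c1 c2 T" and z: "\<forall>n\<in>idx. (\<Sum>m\<in>idx. T n m * z m) = 0" and a: "a \<in> idx"
  shows "z a = 0"
proof -
  obtain S where ST: "\<forall>a\<in>idx. \<forall>b\<in>idx. (\<Sum>m\<in>idx. S a m * T m b) = (if a = b then 1 else 0)"
    using assms(1) unfolding lie_iso_def by blast
  have "z a = (\<Sum>m\<in>idx. z m * (if m = a then 1 else 0))"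
    using sum_idx_delta[OF a] by simp
  also have "\<dots> = (\<Sum>m\<in>idx. z m * (\<Sum>k\<in>idx. S a k * T k m))"
    using ST a by (intro sum.cong refl) auto
  also have "\<dots> = (\<Sum>m\<in>idx. \<Sum>k\<in>idx. S a k * (T k m * z m))"
    by (simp only: sum_distrib_left) (simp only: mult_ac)
  also have "\<dots> = (\<Sum>k\<in>idx. \<Sum>m\<in>idx. S a k * (T k m * z m))"
    by (rule sum.swap)
  also have "\<dots> = (\<Sum>k\<in>idx. S a k * (\<Sum>m\<in>idx. T k m * z m))"
    by (simp only: sum_distrib_left)
  also have "\<dots> = 0" using z by simp
  finally show ?thesis .
qed

lemma sum_rotate3:
  "(\<Sum>a\<in>A. \<Sum>b\<in>B. \<Sum>c\<in>C. f a b c) = (\<Sum>b\<in>B. \<Sum>c\<in>C. \<Sum>a\<in>A. f a b c)"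
  by (subst sum.swap) (rule sum.cong[OF refl], rule sum.swap)

(* tr ad_(T x) = tr (T ad_x T^-1) = tr ad_x, written out in coordinates. *)
lemma lie_iso_trace_ad:
  assumes iso: "lie_iso c1 c2 T" and b: "b \<in> idx"
  shows "(\<Sum>p\<in>idx. T p b * (\<Sum>n\<in>idx. c2 p n n)) = (\<Sum>k\<in>idx. c1 b k k)"
proof -
  obtain S where
    ST: "\<forall>a\<in>idx. \<forall>b\<in>idx. (\<Sum>m\<in>idx. S a m * T m b) = (if a = b then 1 else 0)" and
    TS: "\<forall>a\<in>idx. \<forall>b\<in>idx. (\<Sum>m\<in>idx. T a m * S m b) = (if a = b then 1 else 0)"
    using iso unfolding lie_iso_def by blast
  have "(\<Sum>p\<in>idx. T p b * (\<Sum>n\<in>idx. c2 p n n)) = (\<Sum>n\<in>idx. \<Sum>p\<in>idx. T p b * c2 p n n)"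
    by (simp only: sum_distrib_left) (rule sum.swap)
  also have "\<dots> = (\<Sum>n\<in>idx. \<Sum>p\<in>idx. \<Sum>q\<in>idx. T p b * c2 p q n * (\<Sum>k\<in>idx. T q k * S k n))"
  proof (intro sum.cong refl)
    fix n p assume n: "n \<in> idx"
    have "(\<Sum>q\<in>idx. T p b * c2 p q n * (\<Sum>k\<in>idx. T q k * S k n))
        = (\<Sum>q\<in>idx. T p b * c2 p q n * (if q = n then 1 else 0))"
      using TS n by (intro sum.cong refl) auto
    then show "T p b * c2 p n n = (\<Sum>q\<in>idx. T p b * c2 p q n * (\<Sum>k\<in>idx. T q k * S k n))"
      using sum_idx_delta[OF n] by simp
  qed
  also have "\<dots> = (\<Sum>n\<in>idx. \<Sum>k\<in>idx. \<Sum>p\<in>idx. \<Sum>q\<in>idx. S k n * (T p b * T q k * c2 p q n))"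
    by (rule sum.cong[OF refl]) (simp only: sum_distrib_left mult_ac, rule sum_rotate3[symmetric])
  also have "\<dots> = (\<Sum>n\<in>idx. \<Sum>k\<in>idx. S k n * (\<Sum>m\<in>idx. c1 b k m * T n m))"
    using lie_iso_bracket[OF iso b] by (intro sum.cong refl) (auto simp: sum_distrib_left)
  also have "\<dots> = (\<Sum>k\<in>idx. \<Sum>m\<in>idx. c1 b k m * (\<Sum>n\<in>idx. S k n * T n m))"
    by (simp only: sum_distrib_left mult_ac, rule sum_rotate3)
  also have "\<dots> = (\<Sum>k\<in>idx. \<Sum>m\<in>idx. c1 b k m * (if m = k then 1 else 0))"
    using ST by (intro sum.cong refl) auto
  also have "\<dots> = (\<Sum>k\<in>idx. c1 b k k)"
    by (intro sum.cong refl) (rule sum_idx_delta)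
  finally show ?thesis .
qed

lemma trace_ad_s_sc: "p \<in> idx \<Longrightarrow> (\<Sum>n\<in>idx. s_sc a p n n) = (if p = 7 then 2 else 0)"
  unfolding idx_eq by (auto simp: sum_idx[unfolded idx_eq] s_sc_def ub_s_def A_s_def field_simps)

lemma trace_ad_g_sc: "b \<in> idx \<Longrightarrow> (\<Sum>k\<in>idx. g_sc s b k k) = (if b = 7 then 3/2 else 0)"
  unfolding idx_eq by (auto simp: sum_idx[unfolded idx_eq] g_sc_eval)

lemmas s_sc_eval = s_sc_def ub_s_def

lemma span_elim:
  fixes N p u v q \<alpha> \<beta> \<gamma> \<delta> :: real
  assumes "N * p = \<alpha> * u + \<beta> * v" "N * q = \<gamma> * u + \<delta> * v"
  shows "(\<delta> * N) * p + (- (\<alpha> * \<delta> - \<beta> * \<gamma>)) * u + (- (\<beta> * N)) * q = 0"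
  using assms by algebra

(* The hypotheses say that p commutes with u in the nilradical of s_a modulo its centre, a complex
   Heisenberg algebra; the conclusion is N p = alpha u + beta J u, where
   J(u1,u2,u3,u4) = (u2,-u1,u4,-u3). *)
lemma complex_heisenberg_centraliser:
  fixes u1 u2 u3 u4 p1 p2 p3 p4 :: real
  assumes "- u1 * p4 + u4 * p1 - u2 * p3 + u3 * p2 = 0"
    and "- u1 * p3 + u3 * p1 + u2 * p4 - u4 * p2 = 0"
  defines "N \<equiv> u1^2 + u2^2 + u3^2 + u4^2"
    and "\<alpha> \<equiv> u1 * p1 + u2 * p2 + u3 * p3 + u4 * p4"
    and "\<beta> \<equiv> u2 * p1 - u1 * p2 + u4 * p3 - u3 * p4"
  shows "N * p1 = \<alpha> * u1 + \<beta> * u2" "N * p2 = \<alpha> * u2 - \<beta> * u1"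
    "N * p3 = \<alpha> * u3 + \<beta> * u4" "N * p4 = \<alpha> * u4 - \<beta> * u3"
  using assms unfolding N_def \<alpha>_def \<beta>_def by algebra+

context
  fixes s a :: real and T :: endo
  assumes iso: "lie_iso (g_sc s) (s_sc a) T"
begin

lemma iso_image_in_nilradical: "T 7 1 = 0" "T 7 2 = 0" "T 7 3 = 0" "T 7 4 = 0" "T 7 5 = 0" "T 7 6 = 0"
proof -
  have "2 * T 7 b = (if b = 7 then 3/2 else 0)" if "b \<in> idx" for b
  proof -
    have "(\<Sum>p\<in>idx. T p b * (\<Sum>n\<in>idx. s_sc a p n n)) = (\<Sum>p\<in>idx. if p = 7 then 2 * T 7 b else 0)"
      by (rule sum.cong) (simp_all add: trace_ad_s_sc)
    also have "\<dots> = 2 * T 7 b"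
      by (simp add: idx_def)
    finally have "(\<Sum>p\<in>idx. T p b * (\<Sum>n\<in>idx. s_sc a p n n)) = 2 * T 7 b" .
    then show ?thesis using lie_iso_trace_ad[OF iso that] trace_ad_g_sc[OF that] by simp
  qed
  from this[of 1] this[of 2] this[of 3] this[of 4] this[of 5] this[of 6]
  show "T 7 1 = 0" "T 7 2 = 0" "T 7 3 = 0" "T 7 4 = 0" "T 7 5 = 0" "T 7 6 = 0"
    by (simp_all add: mem_idx_iff)
qed

(* The hypothesis says that T maps x1 e1 + x2 e2 + x4 e4 into span(e5,e6), which is central in
   the nilradical of s_a; hence T kills the brackets of x1 e1 + x2 e2 + x4 e4 with e1 and e3. *)
lemma iso_bracket_with_central_image:
  assumes central: "\<forall>i\<in>{1,2,3,4,7}. x1 * T i 1 + x2 * T i 2 + x4 * T i 4 = 0"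
    and b: "b \<in> {1, 3}" and n: "n \<in> idx"
  shows "x1 * (\<Sum>m\<in>idx. g_sc s 1 b m * T n m) + x2 * (\<Sum>m\<in>idx. g_sc s 2 b m * T n m)
          + x4 * (\<Sum>m\<in>idx. g_sc s 4 b m * T n m) = 0"
proof -
  define y where "y p = x1 * T p 1 + x2 * T p 2 + x4 * T p 4" for p
  have y0: "y 1 = 0" "y (Suc 0) = 0" "y 2 = 0" "y 3 = 0" "y 4 = 0" "y 7 = 0"
    using central unfolding y_def by auto
  have "T 7 b = 0" "b \<in> idx"
    using b iso_image_in_nilradical by (auto simp: mem_idx_iff)
  then have "x1 * (\<Sum>m\<in>idx. g_sc s 1 b m * T n m) + x2 * (\<Sum>m\<in>idx. g_sc s 2 b m * T n m)
          + x4 * (\<Sum>m\<in>idx. g_sc s 4 b m * T n m)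
      = x1 * (\<Sum>p\<in>idx. \<Sum>q\<in>idx. T p 1 * T q b * s_sc a p q n)
        + x2 * (\<Sum>p\<in>idx. \<Sum>q\<in>idx. T p 2 * T q b * s_sc a p q n)
        + x4 * (\<Sum>p\<in>idx. \<Sum>q\<in>idx. T p 4 * T q b * s_sc a p q n)"
    using n by (simp add: lie_iso_bracket[OF iso] mem_idx_iff)
  also have "\<dots> = (\<Sum>p\<in>idx. \<Sum>q\<in>idx. y p * T q b * s_sc a p q n)"
    unfolding y_def by (simp add: sum.distrib sum_distrib_left algebra_simps)
  also have "\<dots> = 0"
    using \<open>T 7 b = 0\<close> by (simp add: sum_idx y0 s_sc_eval)
  finally show ?thesis .
qed

lemma iso_no_central_combination:
  assumes central: "\<forall>i\<in>{1,2,3,4,7}. x1 * T i 1 + x2 * T i 2 + x4 * T i 4 = 0"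
  shows "x1 = 0 \<and> x2 = 0 \<and> x4 = 0"
proof -
  have "x1 * T n 6 + x2 * T n 5 = 0" if "n \<in> idx" for n
    using iso_bracket_with_central_image[OF central, of 3 n] that
    by (simp add: sum_idx g_sc_eval)
  then have "\<forall>n\<in>idx. (\<Sum>m\<in>idx. T n m * (if m = 5 then x2 else if m = 6 then x1 else 0)) = 0"
    by (simp add: sum_idx algebra_simps)
  from lie_iso_injective[OF iso this, of 5] lie_iso_injective[OF iso this, of 6]
  have "x1 = 0" "x2 = 0" by (simp_all add: mem_idx_iff)
  moreover have "x4 * T n 5 = 0" if "n \<in> idx" for n
    using iso_bracket_with_central_image[OF central, of 1 n] that by (simp add: sum_idx g_sc_eval)
  then have "\<forall>n\<in>idx. (\<Sum>m\<in>idx. T n m * (if m = 5 then x4 else 0)) = 0"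
    by (simp add: sum_idx algebra_simps)
  from lie_iso_injective[OF iso this, of 5] have "x4 = 0" by (simp add: mem_idx_iff)
  ultimately show ?thesis by simp
qed

lemma iso_image_e2_commutes:
  assumes "b \<in> {1, 4}"
  shows "- T 1 2 * T 4 b + T 4 2 * T 1 b - T 2 2 * T 3 b + T 3 2 * T 2 b = 0"
    and "- T 1 2 * T 3 b + T 3 2 * T 1 b + T 2 2 * T 4 b - T 4 2 * T 2 b = 0"
proof -
  have b: "b \<in> idx" "T 7 b = 0"
    using assms iso_image_in_nilradical by (auto simp: mem_idx_iff)
  have "(\<Sum>p\<in>idx. \<Sum>q\<in>idx. T p 2 * T q b * s_sc a p q n) = 0" if "n \<in> {5, 6}" for n
  proof -
    have "(\<Sum>m\<in>idx. g_sc s 2 b m * T n m) = 0"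
      using assms by (auto simp: sum_idx g_sc_eval)
    moreover have "(2::nat) \<in> idx" "n \<in> idx"
      using that by (auto simp: idx_def)
    ultimately show ?thesis
      using lie_iso_bracket[OF iso _ b(1)] by simp
  qed
  from this[of 5] this[of 6]
  show "- T 1 2 * T 4 b + T 4 2 * T 1 b - T 2 2 * T 3 b + T 3 2 * T 2 b = 0"
    and "- T 1 2 * T 3 b + T 3 2 * T 1 b + T 2 2 * T 4 b - T 4 2 * T 2 b = 0"
    by (simp_all add: sum_idx s_sc_eval b(2) iso_image_in_nilradical algebra_simps)
qed

(* With u = T e2, both T e1 and T e4 lie in span(u, J u); the combination below eliminates J u
   between them. If u = 0, then e2 itself has central image. *)
lemma iso_impossible: False
proof -
  define u1 u2 u3 u4 where "u1 = T 1 2" "u2 = T 2 2" "u3 = T 3 2" "u4 = T 4 2"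
  define p1 p2 p3 p4 where "p1 = T 1 1" "p2 = T 2 1" "p3 = T 3 1" "p4 = T 4 1"
  define q1 q2 q3 q4 where "q1 = T 1 4" "q2 = T 2 4" "q3 = T 3 4" "q4 = T 4 4"
  define N where "N = u1^2 + u2^2 + u3^2 + u4^2"
  define \<alpha> where "\<alpha> = u1 * p1 + u2 * p2 + u3 * p3 + u4 * p4"
  define \<beta> where "\<beta> = u2 * p1 - u1 * p2 + u4 * p3 - u3 * p4"
  define \<gamma> where "\<gamma> = u1 * q1 + u2 * q2 + u3 * q3 + u4 * q4"
  define \<delta> where "\<delta> = u2 * q1 - u1 * q2 + u4 * q3 - u3 * q4"
  note defs = u1_u2_u3_u4_def p1_p2_p3_p4_def q1_q2_q3_q4_def
  have P: "N * p1 = \<alpha> * u1 + \<beta> * u2" "N * p2 = \<alpha> * u2 - \<beta> * u1"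
          "N * p3 = \<alpha> * u3 + \<beta> * u4" "N * p4 = \<alpha> * u4 - \<beta> * u3"
    using complex_heisenberg_centraliser[OF iso_image_e2_commutes[of 1]]
    unfolding N_def \<alpha>_def \<beta>_def defs by simp_all
  have Q: "N * q1 = \<gamma> * u1 + \<delta> * u2" "N * q2 = \<gamma> * u2 - \<delta> * u1"
          "N * q3 = \<gamma> * u3 + \<delta> * u4" "N * q4 = \<gamma> * u4 - \<delta> * u3"
    using complex_heisenberg_centraliser[OF iso_image_e2_commutes[of 4]]
    unfolding N_def \<gamma>_def \<delta>_def defs by simp_all
  have T71: "T 7 (Suc 0) = 0" using iso_image_in_nilradical(1) by simp
  note elim = span_elim[of N _ \<alpha> _ \<beta> _ _ \<gamma> \<delta>]
  have "\<forall>i\<in>{1,2,3,4,7}. (\<delta> * N) * T i 1 + (- (\<alpha> * \<delta> - \<beta> * \<gamma>)) * T i 2 + (- (\<beta> * N)) * T i 4 = 0"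
    using elim[OF P(1) Q(1)] elim[OF P(3) Q(3)] elim[of p2 u2 "- u1" q2] elim[of p4 u4 "- u3" q4] P Q
    unfolding defs by (simp add: iso_image_in_nilradical T71)
  from iso_no_central_combination[OF this] have "\<beta> * N = 0"
    by simp
  show False
  proof (cases "N = 0")
    case True
    then have "u1 = 0 \<and> u2 = 0 \<and> u3 = 0 \<and> u4 = 0"
      unfolding N_def by (smt (verit) zero_le_power2 power2_eq_square mult_eq_0_iff)
    then have "\<forall>i\<in>{1,2,3,4,7}. 0 * T i 1 + 1 * T i 2 + 0 * T i 4 = 0"
      unfolding defs by (simp add: iso_image_in_nilradical)
    from iso_no_central_combination[OF this] show False by simp
  next
    case False
    with \<open>\<beta> * N = 0\<close> have "\<beta> = 0" by simp
    then have "\<forall>i\<in>{1,2,3,4,7}. N * T i 1 + (- \<alpha>) * T i 2 + 0 * T i 4 = 0"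
      using P unfolding defs by (simp add: iso_image_in_nilradical T71)
    from iso_no_central_combination[OF this] False show False by simp
  qed
qed

end

theorem not_lie_isomorphic_g_sc_s_sc: "\<not> lie_isomorphic (g_sc s) (s_sc a)"
  using iso_impossible unfolding lie_isomorphic_def by blast

theorem theorem4p9:
  shows "(\<forall>s::real. s \<ge> 0 \<longrightarrow>
            laplacian_soliton (g_sc s) phi (c_s s) (D_s s)
          \<and> (s < sqrt 15 / 8 \<longrightarrow> c_s s < 0)
          \<and> (s = sqrt 15 / 8 \<longrightarrow> c_s s = 0)
          \<and> (s > sqrt 15 / 8 \<longrightarrow> c_s s > 0)
          \<and> (expanding_ricci_soliton (g_sc s) \<longleftrightarrow> s = 5/8))
       \<and> (\<forall>a s::real. \<not> lie_isomorphic (g_sc s) (s_sc a))"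
  using laplacian_soliton_g_sc c_s_sign expanding_ricci_soliton_g_sc_iff not_lie_isomorphic_g_sc_s_sc
  by blast

end
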